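(* Let $A,B\in\mathbb{C}^{m\times n}$. The following are equivalent: (a) $A\le^{\diamond}B$; (b) $\mathcal{R}(B^* )=\mathcal{R}(A^* )\oplus\mathcal{R}(B^\dagger-A^\dagger)$ (direct sum); (c) $\mathcal{R}(A^* )\cap\mathcal{R}(B^\dagger-A^\dagger)=\{0\}$ and $\mathcal{R}(A^* )\subseteq\mathcal{R}(B^* )$.
   Context: For a matrix $M$, $M^*$ is its conjugate transpose, $M^\dagger$ its Moore–Penrose inverse, $\mathcal{R}(M)$ its column space. Diamond partial order: for $A,B\in\mathbb{C}^{m\times n}$, $A\le^{\diamond}B$ means $\mathcal{R}(A)\subseteq\mathcal{R}(B)$, $\mathcal{R}(A^* )\subseteq\mathcal{R}(B^* )$, and $AB^*A=AA^*A$. *)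

theory Defs
  imports "HOL-Analysis.Analysis"
begin

text \<open>Complex m x n matrices are modelled as complex ^'n ^'m (m rows, n columns).\<close>

definition conj_transpose :: "complex ^'n ^'m \<Rightarrow> complex ^'m ^'n" where
  "conj_transpose A = (\<chi> i j. cnj (A $ j $ i))"

definition col_space :: "complex ^'n ^'m \<Rightarrow> (complex ^'m) set" where
  "col_space A = range (\<lambda>x. A *v x)"

definition mp_inverse :: "complex ^'n ^'m \<Rightarrow> complex ^'m ^'n" where
  "mp_inverse A = (THE X. A ** X ** A = A \<and> X ** A ** X = X \<and>
      conj_transpose (A ** X) = A ** X \<and> conj_transpose (X ** A) = X ** A)"

definition diamond_le :: "complex ^'n ^'m \<Rightarrow> complex ^'n ^'m \<Rightarrow> bool" where
  "diamond_le A B \<longleftrightarrow> col_space A \<subseteq> col_space B \<and>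
     col_space (conj_transpose A) \<subseteq> col_space (conj_transpose B) \<and>
     A ** conj_transpose B ** A = A ** conj_transpose A ** A"

definition is_direct_sum :: "'a::ab_group_add set \<Rightarrow> 'a set \<Rightarrow> 'a set \<Rightarrow> bool" where
  "is_direct_sum W U V \<longleftrightarrow> W = {u + v | u v. u \<in> U \<and> v \<in> V} \<and> U \<inter> V = {0}"

end

theory Submission
  imports Defs
begin

(*
  Write C = A\<dagger> and D = B\<dagger>. Since R(A\<^sup>H) = R(C) and the kernels of C and A\<^sup>H
  coincide (likewise for D and B\<^sup>H), the three conditions defining A \<le>\<diamond> B become
  N(D) \<subseteq> N(C), R(C) \<subseteq> R(D) and CBC = C. Because DBD = D, these three together are
  equivalent to R(C) \<inter> R(D - C) = {0} with R(C) \<subseteq> R(D): for x = Cu = (D - C)v one gets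
  x = CBx = CBDv - CBCv = Cv - Cv = 0, and conversely a trivial intersection forces
  N(D) \<subseteq> N(C) and CBC = C. Finally R(D) = R(C) + R(D - C) as soon as R(C) \<subseteq> R(D),
  which turns (c) into (b).
*)

notation conj_transpose (\<open>_\<^sup>H\<close> [1000] 999)

lemma conj_transpose_conj_transpose [simp]: "(A\<^sup>H)\<^sup>H = A"
  by (simp add: conj_transpose_def vec_eq_iff)

lemma conj_transpose_mult: "(A ** B)\<^sup>H = B\<^sup>H ** A\<^sup>H"
  by (simp add: conj_transpose_def matrix_matrix_mult_def vec_eq_iff mult.commute)

lemma conj_transpose_diff: "(A - B)\<^sup>H = A\<^sup>H - B\<^sup>H"
  by (simp add: conj_transpose_def vec_eq_iff)

lemma matrix_diff_ldistrib: "(A::'a::ring_1^'n^'m) ** (B - C) = A ** B - A ** C"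
  by (simp add: matrix_matrix_mult_def vec_eq_iff sum_subtractf algebra_simps)

lemma matrix_diff_rdistrib: "((A::'a::ring_1^'n^'m) - B) ** C = A ** C - B ** C"
  by (simp add: matrix_matrix_mult_def vec_eq_iff sum_subtractf algebra_simps)

lemma matrix_vector_mult_axis: "((A::'a::semiring_1^'n^'m) *v axis j 1) $ i = A $ i $ j"
  by (simp add: matrix_vector_mult_def axis_def if_distrib cong: if_cong)

lemma inner_complex_vec: "inner (x::complex^'n) y = Re (\<Sum>i\<in>UNIV. cnj (x $ i) * y $ i)"
  by (simp add: inner_vec_def inner_complex_def Re_sum)

lemma inner_conj_transpose_mult_vector:
  fixes M :: "complex^'n^'m"
  shows "inner (M\<^sup>H *v z) w = inner z (M *v w)"
proof -
  have "(\<Sum>j\<in>UNIV. cnj ((M\<^sup>H *v z) $ j) * w $ j)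
      = (\<Sum>j\<in>UNIV. \<Sum>i\<in>UNIV. cnj (z $ i) * M $ i $ j * w $ j)"
    by (simp add: conj_transpose_def matrix_vector_mult_def sum_distrib_left mult_ac)
  also have "\<dots> = (\<Sum>i\<in>UNIV. cnj (z $ i) * (M *v w) $ i)"
    by (subst sum.swap) (simp add: matrix_vector_mult_def sum_distrib_left mult_ac)
  finally show ?thesis by (simp add: inner_complex_vec)
qed

lemma conj_transpose_mult_self_eq_0:
  fixes N :: "complex^'n^'m"
  assumes "N\<^sup>H ** N = 0"
  shows "N = 0"
proof (subst matrix_eq, intro allI)
  fix x
  have "inner (N *v x) (N *v x) = inner ((N\<^sup>H ** N) *v x) x"
    by (simp add: inner_conj_transpose_mult_vector matrix_vector_mul_assoc[symmetric])
  then show "N *v x = 0 *v x" by (simp add: assms)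
qed

lemma mem_col_space_iff: "x \<in> col_space A \<longleftrightarrow> (\<exists>u. x = A *v u)"
  by (auto simp: col_space_def)

lemma mult_vector_mem_col_space [simp]: "A *v u \<in> col_space A"
  by (auto simp: mem_col_space_iff)

lemma zero_mem_col_space [simp]: "0 \<in> col_space A"
  by (metis matrix_vector_mult_0_right mult_vector_mem_col_space)

lemma col_space_subset_iff_factor:
  fixes X :: "complex^'k^'m" and Y :: "complex^'n^'m"
  shows "col_space X \<subseteq> col_space Y \<longleftrightarrow> (\<exists>G. X = Y ** G)"
proof
  assume "col_space X \<subseteq> col_space Y"
  then have "\<forall>j. \<exists>u. X *v axis j 1 = Y *v u" by (meson mem_col_space_iff subsetD)
  then obtain u where u: "\<And>j. X *v axis j 1 = Y *v u j" by metis
  define G :: "complex^'k^'n" where "G = (\<chi> i j. u j $ i)"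
  have "G *v axis j 1 = u j" for j
    by (simp add: vec_eq_iff matrix_vector_mult_axis G_def)
  then have "X $ i $ j = (Y ** G) $ i $ j" for i j
    by (metis u matrix_vector_mult_axis matrix_vector_mul_assoc)
  then show "\<exists>G. X = Y ** G" by (auto simp: vec_eq_iff)
next
  assume "\<exists>G. X = Y ** G"
  then show "col_space X \<subseteq> col_space Y"
    by (auto simp: mem_col_space_iff matrix_vector_mul_assoc[symmetric])
qed

(* Write b as an element of R(M) plus a vector z orthogonal to R(M); then M\<^sup>H z is orthogonal
   to itself. *)

lemma col_space_conj_transpose_subset_normal:
  fixes M :: "complex^'n^'m"
  shows "col_space (M\<^sup>H) \<subseteq> col_space (M\<^sup>H ** M)"
proof
  fix x assume "x \<in> col_space (M\<^sup>H)"
  then obtain b where x: "x = M\<^sup>H *v b" by (auto simp: mem_col_space_iff)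
  have span_range: "span (range ((*v) M)) = range ((*v) M)"
    by (simp add: span_linear_image)
  obtain y z where y: "y \<in> range ((*v) M)" and z: "\<And>w. w \<in> range ((*v) M) \<Longrightarrow> orthogonal z w"
    and b: "b = y + z"
    using orthogonal_subspace_decomp_exists[of "range ((*v) M)" b] unfolding span_range by blast
  obtain u where u: "y = M *v u" using y by blast
  have "inner (M\<^sup>H *v z) (M\<^sup>H *v z) = inner z (M *v (M\<^sup>H *v z))"
    by (rule inner_conj_transpose_mult_vector)
  also have "\<dots> = 0" using z by (simp add: orthogonal_def)
  finally have "M\<^sup>H *v z = 0" by simp
  then have "x = (M\<^sup>H ** M) *v u"
    by (simp add: x b u matrix_vector_right_distrib matrix_vector_mul_assoc)
  then show "x \<in> col_space (M\<^sup>H ** M)" by (auto simp: mem_col_space_iff)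
qed

lemma normal_equations_imp_hermitian_inner_inverse:
  fixes M :: "complex^'n^'m"
  assumes G: "M\<^sup>H ** M ** G = M\<^sup>H"
  shows "M ** G ** M = M" and "(M ** G)\<^sup>H = M ** G"
proof -
  have "(M ** G)\<^sup>H = G\<^sup>H ** (M\<^sup>H ** M ** G)" by (simp add: G conj_transpose_mult)
  also have "\<dots> = (M ** G)\<^sup>H ** (M ** G)" by (simp add: conj_transpose_mult matrix_mul_assoc)
  finally have "(M ** G)\<^sup>H = (M ** G)\<^sup>H ** (M ** G)" .
  then have "((M ** G)\<^sup>H)\<^sup>H = (M ** G)\<^sup>H"
    by (metis conj_transpose_mult conj_transpose_conj_transpose)
  then show "(M ** G)\<^sup>H = M ** G" by simp
  define K where "K = G ** M - mat 1"
  have "M\<^sup>H ** M ** K = 0"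
    by (simp add: K_def matrix_diff_ldistrib matrix_mul_assoc G)
  then have "(M ** K)\<^sup>H ** (M ** K) = 0"
    by (metis conj_transpose_mult matrix_mul_assoc times0_right)
  then have "M ** K = 0" by (rule conj_transpose_mult_self_eq_0)
  then show "M ** G ** M = M" by (simp add: K_def matrix_diff_ldistrib matrix_mul_assoc)
qed

definition is_mp_inverse :: "complex^'n^'m \<Rightarrow> complex^'m^'n \<Rightarrow> bool" where
  "is_mp_inverse A X \<longleftrightarrow> A ** X ** A = A \<and> X ** A ** X = X \<and>
      (A ** X)\<^sup>H = A ** X \<and> (X ** A)\<^sup>H = X ** A"

lemma is_mp_inverse_exists:
  fixes A :: "complex^'n^'m"
  shows "\<exists>X. is_mp_inverse A X"
proof -
  obtain G where "A\<^sup>H ** A ** G = A\<^sup>H"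
    using col_space_conj_transpose_subset_normal col_space_subset_iff_factor by metis
  then have AGA: "A ** G ** A = A" and AG: "(A ** G)\<^sup>H = A ** G"
    by (rule normal_equations_imp_hermitian_inner_inverse)+
  obtain H where "(A\<^sup>H)\<^sup>H ** A\<^sup>H ** H = (A\<^sup>H)\<^sup>H"
    using col_space_conj_transpose_subset_normal col_space_subset_iff_factor by metis
  then have HA: "A\<^sup>H ** H ** A\<^sup>H = A\<^sup>H" and AH: "(A\<^sup>H ** H)\<^sup>H = A\<^sup>H ** H"
    by (rule normal_equations_imp_hermitian_inner_inverse)+
  define L where "L = H\<^sup>H"
  have ALA: "A ** L ** A = A"
    by (metis HA L_def conj_transpose_conj_transpose conj_transpose_mult matrix_mul_assoc)
  have LA: "(L ** A)\<^sup>H = L ** A"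
    by (metis AH L_def conj_transpose_conj_transpose conj_transpose_mult)
  have AGA': "Y ** A ** G ** A = Y ** A" and ALA': "Y ** A ** L ** A = Y ** A" for Y :: "complex^'m^'k"
    by (metis AGA ALA matrix_mul_assoc)+
  have "is_mp_inverse A (L ** A ** G)"
    unfolding is_mp_inverse_def
    by (simp add: matrix_mul_assoc ALA AGA AG LA AGA' ALA')
  then show ?thesis ..
qed

lemma is_mp_inverse_unique:
  assumes X: "is_mp_inverse A X" and Y: "is_mp_inverse A Y"
  shows "X = Y"
proof -
  from X have x1: "A ** X ** A = A" and x2: "X ** A ** X = X" and x3: "(A ** X)\<^sup>H = A ** X"
    and x4: "(X ** A)\<^sup>H = X ** A" by (auto simp: is_mp_inverse_def)
  from Y have y1: "A ** Y ** A = A" and y2: "Y ** A ** Y = Y" and y3: "(A ** Y)\<^sup>H = A ** Y"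
    and y4: "(Y ** A)\<^sup>H = Y ** A" by (auto simp: is_mp_inverse_def)
  have "X = X ** (A ** X)\<^sup>H" using x2 x3 by (simp add: matrix_mul_assoc)
  also have "\<dots> = X ** (A ** Y ** A ** X)\<^sup>H" using y1 by simp
  also have "\<dots> = X ** (A ** X)\<^sup>H ** (A ** Y)\<^sup>H" by (simp add: conj_transpose_mult matrix_mul_assoc)
  also have "\<dots> = X ** A ** Y" using x2 x3 y3 by (simp add: matrix_mul_assoc)
  finally have XAY: "X = X ** A ** Y" .
  have "Y = (Y ** A)\<^sup>H ** Y" using y2 y4 by simp
  also have "\<dots> = (Y ** (A ** X ** A))\<^sup>H ** Y" using x1 by simp
  also have "\<dots> = (X ** A)\<^sup>H ** (Y ** A)\<^sup>H ** Y" by (simp add: conj_transpose_mult matrix_mul_assoc)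
  also have "\<dots> = X ** A ** (Y ** A ** Y)" using x4 y4 by (simp add: matrix_mul_assoc)
  also have "\<dots> = X ** A ** Y" using y2 by simp
  finally show ?thesis using XAY by simp
qed

lemma is_mp_inverse_mp_inverse: "is_mp_inverse A (mp_inverse A)"
proof -
  obtain X where X: "is_mp_inverse A X" using is_mp_inverse_exists by blast
  then have "is_mp_inverse A (THE X. is_mp_inverse A X)"
    by (rule theI) (use X is_mp_inverse_unique in blast)
  then show ?thesis unfolding mp_inverse_def is_mp_inverse_def .
qed

lemma is_mp_inverse_conj_transpose_identities:
  assumes "is_mp_inverse A C"
  shows "C = C ** C\<^sup>H ** A\<^sup>H" and "C = A\<^sup>H ** C\<^sup>H ** C"
    and "A\<^sup>H = C ** A ** A\<^sup>H" and "A\<^sup>H = A\<^sup>H ** A ** C"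
    and "A = A ** A\<^sup>H ** C\<^sup>H" and "A = C\<^sup>H ** A\<^sup>H ** A"
proof -
  from assms have ACA: "A ** C ** A = A" and CAC: "C ** A ** C = C"
    and AC: "(A ** C)\<^sup>H = A ** C" and CA: "(C ** A)\<^sup>H = C ** A"
    by (auto simp: is_mp_inverse_def)
  have "C ** C\<^sup>H ** A\<^sup>H = C ** (A ** C)\<^sup>H" by (simp only: conj_transpose_mult matrix_mul_assoc)
  also have "\<dots> = C" by (simp only: AC matrix_mul_assoc CAC)
  finally show "C = C ** C\<^sup>H ** A\<^sup>H" ..
  have "A\<^sup>H ** C\<^sup>H ** C = (C ** A)\<^sup>H ** C" by (simp only: conj_transpose_mult)
  also have "\<dots> = C" by (simp only: CA CAC)
  finally show "C = A\<^sup>H ** C\<^sup>H ** C" ..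
  have "C ** A ** A\<^sup>H = (C ** A)\<^sup>H ** A\<^sup>H" by (simp only: CA)
  also have "\<dots> = (A ** (C ** A))\<^sup>H" by (simp only: conj_transpose_mult)
  also have "\<dots> = A\<^sup>H" by (simp only: matrix_mul_assoc ACA)
  finally show "A\<^sup>H = C ** A ** A\<^sup>H" ..
  have "A\<^sup>H ** A ** C = A\<^sup>H ** (A ** C)\<^sup>H" by (simp only: AC matrix_mul_assoc)
  also have "\<dots> = (A ** C ** A)\<^sup>H" by (simp only: conj_transpose_mult matrix_mul_assoc)
  also have "\<dots> = A\<^sup>H" by (simp only: ACA)
  finally show "A\<^sup>H = A\<^sup>H ** A ** C" ..
  have "A ** A\<^sup>H ** C\<^sup>H = A ** (C ** A)\<^sup>H" by (simp only: conj_transpose_mult matrix_mul_assoc)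
  also have "\<dots> = A" by (simp only: CA matrix_mul_assoc ACA)
  finally show "A = A ** A\<^sup>H ** C\<^sup>H" ..
  have "C\<^sup>H ** A\<^sup>H ** A = (A ** C)\<^sup>H ** A" by (simp only: conj_transpose_mult)
  also have "\<dots> = A" by (simp only: AC ACA)
  finally show "A = C\<^sup>H ** A\<^sup>H ** A" ..
qed

lemma is_mp_inverse_col_space_conj_transpose:
  assumes "is_mp_inverse A C"
  shows "col_space (A\<^sup>H) = col_space C"
  using is_mp_inverse_conj_transpose_identities(2,3)[OF assms]
  by (metis col_space_subset_iff_factor matrix_mul_assoc subset_antisym)

lemma is_mp_inverse_mult_vector_eq_0_iff:
  assumes "is_mp_inverse A C"
  shows "C *v y = 0 \<longleftrightarrow> A\<^sup>H *v y = 0"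
  using is_mp_inverse_conj_transpose_identities(1,4)[OF assms]
  by (metis matrix_vector_mul_assoc matrix_vector_mult_0_right)

(* For the converse, the Moore-Penrose inverse D of B gives the orthogonal projection B D onto
   R(B), and the defect K = A - B D A satisfies K\<^sup>H K = 0. *)

lemma col_space_subset_iff_null_conj_transpose:
  fixes A :: "complex^'k^'m" and B :: "complex^'n^'m"
  shows "col_space A \<subseteq> col_space B \<longleftrightarrow> (\<forall>y. B\<^sup>H *v y = 0 \<longrightarrow> A\<^sup>H *v y = 0)"
proof
  assume "col_space A \<subseteq> col_space B"
  then obtain G where "A = B ** G" using col_space_subset_iff_factor by blast
  then show "\<forall>y. B\<^sup>H *v y = 0 \<longrightarrow> A\<^sup>H *v y = 0"
    by (simp add: conj_transpose_mult matrix_vector_mul_assoc[symmetric])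
next
  assume null: "\<forall>y. B\<^sup>H *v y = 0 \<longrightarrow> A\<^sup>H *v y = 0"
  define D where "D = mp_inverse B"
  have D: "is_mp_inverse B D" unfolding D_def by (rule is_mp_inverse_mp_inverse)
  define K where "K = A - B ** D ** A"
  have "B\<^sup>H ** K = B\<^sup>H ** A - (B\<^sup>H ** B ** D) ** A"
    by (simp add: K_def matrix_diff_ldistrib matrix_mul_assoc)
  then have BK: "B\<^sup>H ** K = 0"
    by (simp flip: is_mp_inverse_conj_transpose_identities(4)[OF D])
  have AK: "A\<^sup>H ** K = 0"
  proof (subst matrix_eq, intro allI)
    fix x
    have "B\<^sup>H *v (K *v x) = 0" by (simp add: matrix_vector_mul_assoc BK)
    then show "(A\<^sup>H ** K) *v x = 0 *v x" using null by (simp add: matrix_vector_mul_assoc[symmetric])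
  qed
  have "K\<^sup>H ** K = A\<^sup>H ** K - A\<^sup>H ** D\<^sup>H ** (B\<^sup>H ** K)"
    by (simp add: K_def conj_transpose_diff conj_transpose_mult matrix_diff_rdistrib matrix_mul_assoc)
  also have "\<dots> = 0" by (simp add: AK BK)
  finally have "K = 0" by (rule conj_transpose_mult_self_eq_0)
  then have "A = B ** D ** A" unfolding K_def right_minus_eq .
  then have "A = B ** (D ** A)" unfolding matrix_mul_assoc .
  then show "col_space A \<subseteq> col_space B" using col_space_subset_iff_factor by blast
qed

lemma is_mp_inverse_sandwich_iff:
  fixes A B :: "complex^'n^'m"
  assumes "is_mp_inverse A C"
  shows "A ** B\<^sup>H ** A = A ** A\<^sup>H ** A \<longleftrightarrow> C ** B ** C = C"
proof -
  note ids = is_mp_inverse_conj_transpose_identities[OF assms]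
  have CAC: "C ** A ** C = C" using assms by (simp add: is_mp_inverse_def)
  show ?thesis
  proof
    assume "A ** B\<^sup>H ** A = A ** A\<^sup>H ** A"
    then have "(A ** B\<^sup>H ** A)\<^sup>H = (A ** A\<^sup>H ** A)\<^sup>H" by simp
    then have sandwich: "A\<^sup>H ** B ** A\<^sup>H = A\<^sup>H ** A ** A\<^sup>H"
      by (simp add: conj_transpose_mult matrix_mul_assoc)
    have "C ** B ** C = (C ** C\<^sup>H ** A\<^sup>H) ** B ** (A\<^sup>H ** C\<^sup>H ** C)"
      by (simp only: ids(1,2)[symmetric])
    also have "\<dots> = C ** C\<^sup>H ** (A\<^sup>H ** B ** A\<^sup>H) ** C\<^sup>H ** C"
      by (simp only: matrix_mul_assoc)
    also have "\<dots> = (C ** C\<^sup>H ** A\<^sup>H) ** A ** (A\<^sup>H ** C\<^sup>H ** C)"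
      by (simp add: sandwich matrix_mul_assoc)
    also have "\<dots> = C" by (simp flip: ids(1,2) add: CAC)
    finally show "C ** B ** C = C" .
  next
    assume CBC: "C ** B ** C = C"
    have "A ** B\<^sup>H ** A = (A ** A\<^sup>H ** C\<^sup>H) ** B\<^sup>H ** (C\<^sup>H ** A\<^sup>H ** A)"
      by (simp only: ids(5,6)[symmetric])
    also have "\<dots> = A ** A\<^sup>H ** (C ** B ** C)\<^sup>H ** A\<^sup>H ** A"
      by (simp only: conj_transpose_mult matrix_mul_assoc)
    also have "\<dots> = (A ** A\<^sup>H ** C\<^sup>H) ** A\<^sup>H ** A" by (simp add: CBC matrix_mul_assoc)
    also have "\<dots> = A ** A\<^sup>H ** A" by (simp flip: ids(5))
    finally show "A ** B\<^sup>H ** A = A ** A\<^sup>H ** A" .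
  qed
qed

lemma col_space_inter_diff_eq_0_imp_null_subset:
  assumes "col_space C \<inter> col_space (D - C) = {0}" and "D *v y = 0"
  shows "C *v y = 0"
proof -
  have "C *v y = (D - C) *v (- y)"
    by (simp add: assms(2) matrix_vector_mult_diff_rdistrib linear_neg[OF matrix_vector_mul_linear])
  then have "C *v y \<in> col_space C \<inter> col_space (D - C)" by (metis IntI mult_vector_mem_col_space)
  then show ?thesis using assms(1) by blast
qed

lemma col_space_inter_diff_eq_0:
  fixes C D :: "complex^'m^'n" and B :: "complex^'n^'m"
  assumes DBD: "D ** B ** D = D" and null: "\<And>y. D *v y = 0 \<Longrightarrow> C *v y = 0"
    and CBC: "C ** B ** C = C"
  shows "col_space C \<inter> col_space (D - C) = {0}"
proof -
  have CBD: "C *v (B *v (D *v v)) = C *v v" for v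
  proof -
    have "D *v (v - B *v (D *v v)) = 0"
      using DBD by (simp add: matrix_vector_mult_diff_distrib matrix_vector_mul_assoc matrix_mul_assoc)
    then have "C *v (v - B *v (D *v v)) = 0" by (rule null)
    then show ?thesis by (simp add: matrix_vector_mult_diff_distrib)
  qed
  have CBC': "C *v (B *v (C *v v)) = C *v v" for v
    using CBC by (simp add: matrix_vector_mul_assoc matrix_mul_assoc)
  have "x = 0" if xC: "x \<in> col_space C" and xDC: "x \<in> col_space (D - C)" for x
  proof -
    obtain u v where u: "x = C *v u" and v: "x = (D - C) *v v"
      using xC xDC unfolding mem_col_space_iff by blast
    have "x = C *v (B *v x)" by (simp add: u CBC')
    also have "\<dots> = C *v (B *v (D *v v)) - C *v (B *v (C *v v))"
      by (simp add: v matrix_vector_mult_diff_rdistrib matrix_vector_mult_diff_distrib)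
    also have "\<dots> = 0" by (simp add: CBD CBC')
    finally show ?thesis .
  qed
  then show ?thesis by auto
qed

lemma col_space_inter_diff_eq_0_imp_inner_inverse:
  fixes C D :: "complex^'m^'n" and B :: "complex^'n^'m"
  assumes DBD: "D ** B ** D = D" and inter: "col_space C \<inter> col_space (D - C) = {0}"
    and sub: "col_space C \<subseteq> col_space D"
  shows "C ** B ** C = C"
proof (subst matrix_eq, intro allI)
  fix z
  obtain t where t: "C *v z = D *v t"
    using sub mult_vector_mem_col_space mem_col_space_iff by (metis subsetD)
  define w where "w = B *v (C *v z)"
  have Dw: "D *v w = C *v z"
    using DBD by (simp add: w_def t matrix_vector_mul_assoc matrix_mul_assoc)
  have "C *v z - C *v w = (D - C) *v w" by (simp add: Dw matrix_vector_mult_diff_rdistrib)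
  moreover have "C *v z - C *v w = C *v (z - w)" by (simp add: matrix_vector_mult_diff_distrib)
  ultimately have "C *v z - C *v w \<in> col_space C \<inter> col_space (D - C)"
    by (metis IntI mult_vector_mem_col_space)
  then have "C *v w = C *v z" using inter by simp
  then show "(C ** B ** C) *v z = C *v z"
    by (simp add: w_def matrix_vector_mul_assoc[symmetric])
qed

lemma col_space_inter_diff_eq_0_iff:
  fixes C D :: "complex^'m^'n" and B :: "complex^'n^'m"
  assumes "D ** B ** D = D"
  shows "((\<forall>y. D *v y = 0 \<longrightarrow> C *v y = 0) \<and> col_space C \<subseteq> col_space D \<and> C ** B ** C = C)
     \<longleftrightarrow> col_space C \<inter> col_space (D - C) = {0} \<and> col_space C \<subseteq> col_space D"
proof
  assume "(\<forall>y. D *v y = 0 \<longrightarrow> C *v y = 0) \<and> col_space C \<subseteq> col_space D \<and> C ** B ** C = C"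
  then show "col_space C \<inter> col_space (D - C) = {0} \<and> col_space C \<subseteq> col_space D"
    using col_space_inter_diff_eq_0[OF assms, of C] by simp
next
  assume "col_space C \<inter> col_space (D - C) = {0} \<and> col_space C \<subseteq> col_space D"
  then show "(\<forall>y. D *v y = 0 \<longrightarrow> C *v y = 0) \<and> col_space C \<subseteq> col_space D \<and> C ** B ** C = C"
    using col_space_inter_diff_eq_0_imp_null_subset[of C D]
      col_space_inter_diff_eq_0_imp_inner_inverse[OF assms, of C] by blast
qed

lemma is_direct_sum_col_space_diff_iff:
  "is_direct_sum (col_space D) (col_space C) (col_space (D - C))
     \<longleftrightarrow> col_space C \<inter> col_space (D - C) = {0} \<and> col_space C \<subseteq> col_space D"
proof -
  let ?sum = "{u + v |u v. u \<in> col_space C \<and> v \<in> col_space (D - C)}"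
  have D_sub: "col_space D \<subseteq> ?sum"
  proof
    fix x assume "x \<in> col_space D"
    then obtain y where "x = D *v y" by (auto simp: mem_col_space_iff)
    then have "x = C *v y + (D - C) *v y" by (simp add: matrix_vector_mult_diff_rdistrib)
    then show "x \<in> ?sum" using mult_vector_mem_col_space by blast
  qed
  have C_sub: "col_space C \<subseteq> ?sum"
  proof
    fix x assume "x \<in> col_space C"
    moreover have "x = x + 0" by simp
    ultimately show "x \<in> ?sum" using zero_mem_col_space by blast
  qed
  have sum_sub: "?sum \<subseteq> col_space D" if CD: "col_space C \<subseteq> col_space D"
  proof
    fix x assume "x \<in> ?sum"
    then obtain a b where x: "x = C *v a + (D - C) *v b" by (auto simp: mem_col_space_iff)
    obtain t s where "C *v a = D *v t" and "C *v b = D *v s"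
      using CD mult_vector_mem_col_space mem_col_space_iff by (metis subsetD)
    then have "x = D *v (t + b - s)"
      by (simp add: x matrix_vector_mult_diff_rdistrib matrix_vector_right_distrib
          matrix_vector_mult_diff_distrib)
    then show "x \<in> col_space D" by simp
  qed
  show ?thesis
    unfolding is_direct_sum_def
  proof
    assume "col_space D = ?sum \<and> col_space C \<inter> col_space (D - C) = {0}"
    with C_sub show "col_space C \<inter> col_space (D - C) = {0} \<and> col_space C \<subseteq> col_space D"
      by simp
  next
    assume "col_space C \<inter> col_space (D - C) = {0} \<and> col_space C \<subseteq> col_space D"
    with D_sub sum_sub show "col_space D = ?sum \<and> col_space C \<inter> col_space (D - C) = {0}"
      by (simp add: subset_antisym)
  qed
qed

theorem theorem3p2:
  fixes A B :: "complex ^'n ^'m"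
  shows "(diamond_le A B \<longleftrightarrow>
           is_direct_sum (col_space (conj_transpose B)) (col_space (conj_transpose A))
             (col_space (mp_inverse B - mp_inverse A)))
       \<and> (diamond_le A B \<longleftrightarrow>
           (col_space (conj_transpose A) \<inter> col_space (mp_inverse B - mp_inverse A) = {0}
            \<and> col_space (conj_transpose A) \<subseteq> col_space (conj_transpose B)))"
proof -
  define C where "C = mp_inverse A"
  define D where "D = mp_inverse B"
  have C: "is_mp_inverse A C" and D: "is_mp_inverse B D"
    unfolding C_def D_def by (rule is_mp_inverse_mp_inverse)+
  have DBD: "D ** B ** D = D" using D by (simp add: is_mp_inverse_def)
  have "diamond_le A B \<longleftrightarrow>
      (\<forall>y. D *v y = 0 \<longrightarrow> C *v y = 0) \<and> col_space C \<subseteq> col_space D \<and> C ** B ** C = C"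
    unfolding diamond_le_def col_space_subset_iff_null_conj_transpose[of A B]
      is_mp_inverse_mult_vector_eq_0_iff[OF C] is_mp_inverse_mult_vector_eq_0_iff[OF D]
      is_mp_inverse_col_space_conj_transpose[OF C] is_mp_inverse_col_space_conj_transpose[OF D]
      is_mp_inverse_sandwich_iff[OF C] ..
  then show ?thesis
    unfolding C_def[symmetric] D_def[symmetric]
      is_mp_inverse_col_space_conj_transpose[OF C] is_mp_inverse_col_space_conj_transpose[OF D]
      col_space_inter_diff_eq_0_iff[OF DBD] is_direct_sum_col_space_diff_iff
    by blast
qed

end
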